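(* Let $x\in\mathbb{S}$. Then, as $N\to\infty$ over integers, $\epsilon(N)\to0$, $\epsilon(N,x)\to0$ and $P_N(x,\{x\})\to\pi(\{x\})$.
   Context: Let $\pi,q$ be probability densities with respect to a $\sigma$-finite measure $\mu$ on $(\mathbb{X},\mathcal{X})$ (singletons measurable) with $q>0$ wherever $\pi>0$; $\pi(dx)=\pi(x)\mu(dx)$, $\pi(A)=\int_A\pi(dx)$, $q(dx)=q(x)\mu(dx)$, $\mathbb{S}=\{\pi>0\}$, $w=\pi/q$ on $\mathbb{S}$ and $0$ elsewhere. For integer $N\ge1$ and $z_1\in\mathbb{S}$: $P_N(z_1,A)=\int_{\mathbb{X}^{N-1}}\sum_{i=1}^N\frac{w(z_i)}{\sum_{j=1}^Nw(z_j)}\mathbf 1\{z_i\in A\}\prod_{n=2}^Nq(dz_n)$ ($P_1(z,\cdot)=\delta_z$), $\epsilon(N,z_1)=\int_{\mathbb{X}^{N-1}}\frac{w(z_1)}{\sum_{i=1}^Nw(z_i)}\prod_{n=2}^Nq(dz_n)$, $\epsilon(N)=\int_{\mathbb{S}}\epsilon(N,z)\pi(dz)$. *)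

theory Defs
  imports "HOL-Probability.Probability"
begin

definition supp_pi :: "'a measure \<Rightarrow> ('a \<Rightarrow> real) \<Rightarrow> 'a set" where
  "supp_pi M p = {x \<in> space M. p x > 0}"

definition wt :: "'a measure \<Rightarrow> ('a \<Rightarrow> real) \<Rightarrow> ('a \<Rightarrow> real) \<Rightarrow> 'a \<Rightarrow> real" where
  "wt M p q x = (if x \<in> supp_pi M p then p x / q x else 0)"

definition prop_prod :: "'a measure \<Rightarrow> ('a \<Rightarrow> real) \<Rightarrow> nat \<Rightarrow> (nat \<Rightarrow> 'a) measure" where
  "prop_prod M q N = PiM {2..N} (\<lambda>_. density M (\<lambda>x. ennreal (q x)))"

definition PN :: "'a measure \<Rightarrow> ('a \<Rightarrow> real) \<Rightarrow> ('a \<Rightarrow> real) \<Rightarrow> nat \<Rightarrow> 'a \<Rightarrow> 'a set \<Rightarrow> real" where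
  "PN M p q N z1 A = (\<integral>z. (let z' = z(1 := z1) in
       (\<Sum>i\<in>{1..N}. wt M p q (z' i) / (\<Sum>j\<in>{1..N}. wt M p q (z' j)) * indicator A (z' i)))
     \<partial>(prop_prod M q N))"

definition eps_pt :: "'a measure \<Rightarrow> ('a \<Rightarrow> real) \<Rightarrow> ('a \<Rightarrow> real) \<Rightarrow> nat \<Rightarrow> 'a \<Rightarrow> real" where
  "eps_pt M p q N z1 = (\<integral>z. (let z' = z(1 := z1) in
       wt M p q z1 / (\<Sum>i\<in>{1..N}. wt M p q (z' i))) \<partial>(prop_prod M q N))"

definition eps_avg :: "'a measure \<Rightarrow> ('a \<Rightarrow> real) \<Rightarrow> ('a \<Rightarrow> real) \<Rightarrow> nat \<Rightarrow> real" where
  "eps_avg M p q N = (\<integral>z. indicator (supp_pi M p) z * eps_pt M p q N z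
       \<partial>(density M (\<lambda>x. ennreal (p x))))"

end

theory Submission
  imports Defs
begin

(* Let n = N - 1, w = pi/q (so that the q-mean of w is 1), and let Z_2, ..., Z_N be i.i.d. with
   law q.  Both eps(N, x) and P_N(x, {x}) are expectations of ratios whose denominators contain
   sums of n i.i.d. non-negative terms, so only lower tails of such sums matter.  As w need not
   be square integrable, such a lower tail is bounded by Chebyshev's inequality for a truncation
   min w k whose mean is close to that of w: the sum falls below n (E w - delta) with probability
   O(1/n).  Hence eps(N, x) <= w x / (w x + n/2) + O(1/n) uniformly in x, and dominated
   convergence under pi gives eps(N) -> 0.
   Write P_N(x, {x}) = E [a (1 + C) / (a (1 + C) + R)], where a = w x, C counts the Z_i equal to
   x and R is the total weight of the other Z_i.  The lower tails of n - C and of R give an upper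
   bound.  For a lower bound, the lower tail of C is combined with Jensen's inequality for the
   convex map R |-> c / (c + R), which needs only E R = n (1 - pi {x}).  Letting delta -> 0 gives
   the limit a q {x} = pi {x}. *)

lemma divide_add_mono:
  fixes X X' Y Y' c :: real
  assumes "0 < X" "0 < c" "X \<le> c * X'" "c * Y' \<le> Y" "0 \<le> Y'"
  shows "X / (X + Y) \<le> X' / (X' + Y')"
proof -
  have "0 < c * X'"
    using assms(1,3) by linarith
  then have "0 < X'"
    using assms(2) by (simp add: zero_less_mult_iff)
  have "0 \<le> c * Y'"
    using assms(2,5) by simp
  then have "0 \<le> Y"
    using assms(4) by linarith
  have "X * Y' \<le> (c * X') * Y'"
    using assms by (intro mult_right_mono) auto
  also have "\<dots> = X' * (c * Y')"
    by simp
  also have "\<dots> \<le> X' * Y"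
    using assms \<open>0 < X'\<close> by (intro mult_left_mono) auto
  finally have "X * Y' \<le> X' * Y" .
  then show ?thesis
    using assms \<open>0 < X'\<close> \<open>0 \<le> Y\<close> by (simp add: divide_simps algebra_simps)
qed

lemma count_ratio_le:
  fixes a n C R r \<delta> m :: real
  assumes "0 < a" "1 \<le> n" "0 \<le> C" "C < n * (r + \<delta>)" "n * m \<le> R" "0 \<le> m"
  shows "a * (1 + C) / (a * (1 + C) + R) \<le> a * (1 / n + r + \<delta>) / (a * (1 / n + r + \<delta>) + m)"
proof -
  have "a * (1 + C) \<le> a * (1 + n * (r + \<delta>))"
    using assms(1,4) by (intro mult_left_mono) auto
  also have "\<dots> = n * (a * (1 / n + r + \<delta>))"
    using assms(2) by (simp add: field_simps)
  finally show ?thesis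
    using assms by (intro divide_add_mono[where c = n]) auto
qed

lemma count_ratio_ge:
  fixes a n C R b :: real
  assumes "0 < a" "1 \<le> n" "0 < b" "n * b \<le> 1 + C" "0 \<le> R"
  shows "a * b / (a * b + R / n) \<le> a * (1 + C) / (a * (1 + C) + R)"
proof -
  have "a * b = 1 / n * (a * (n * b))"
    using assms(2) by simp
  also have "\<dots> \<le> 1 / n * (a * (1 + C))"
    using assms by (intro mult_left_mono) auto
  finally show ?thesis
    using assms by (intro divide_add_mono[where c = "1 / n"]) auto
qed

lemma tendsto_from_approximate_bounds:
  fixes f :: "nat \<Rightarrow> real" and U L :: "real \<Rightarrow> real"
  assumes U: "(U \<longlongrightarrow> l) (at_right 0)" and L: "(L \<longlongrightarrow> l) (at_right 0)"
    and upper: "\<And>\<delta>. 0 < \<delta> \<Longrightarrow> \<exists>u. u \<longlonglongrightarrow> U \<delta> \<and> eventually (\<lambda>N. f N \<le> u N) sequentially"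
    and lower: "\<And>\<delta>. 0 < \<delta> \<Longrightarrow> \<exists>v. v \<longlonglongrightarrow> L \<delta> \<and> eventually (\<lambda>N. v N \<le> f N) sequentially"
  shows "f \<longlonglongrightarrow> l"
proof (rule order_tendstoI)
  fix y assume "l < y"
  then have "eventually (\<lambda>\<delta>. 0 < \<delta> \<and> U \<delta> < y) (at_right 0)"
    using eventually_at_right_less[of "0::real"] by (intro eventually_conj order_tendstoD(2)[OF U])
  then obtain \<delta> where "0 < \<delta>" "U \<delta> < y"
    using eventually_happens[of _ "at_right (0::real)"] by auto
  moreover obtain u where "u \<longlonglongrightarrow> U \<delta>" "eventually (\<lambda>N. f N \<le> u N) sequentially"
    using upper \<open>0 < \<delta>\<close> by blast
  ultimately show "eventually (\<lambda>N. f N < y) sequentially"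
    using order_tendstoD(2) by (fastforce elim: eventually_elim2)
next
  fix y assume "y < l"
  then have "eventually (\<lambda>\<delta>. 0 < \<delta> \<and> y < L \<delta>) (at_right 0)"
    using eventually_at_right_less[of "0::real"] by (intro eventually_conj order_tendstoD(1)[OF L])
  then obtain \<delta> where "0 < \<delta>" "y < L \<delta>"
    using eventually_happens[of _ "at_right (0::real)"] by auto
  moreover obtain v where "v \<longlonglongrightarrow> L \<delta>" "eventually (\<lambda>N. v N \<le> f N) sequentially"
    using lower \<open>0 < \<delta>\<close> by blast
  ultimately show "eventually (\<lambda>N. y < f N) sequentially"
    using order_tendstoD(1) by (fastforce elim: eventually_elim2)
qed

lemma tendsto_divide_affine_nat_0:
  fixes a b c :: real
  assumes "0 < b"
  shows "(\<lambda>n::nat. c / (a + b * real n)) \<longlonglongrightarrow> 0"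
proof (rule tendsto_divide_0[OF tendsto_const filterlim_at_top_imp_at_infinity])
  show "filterlim (\<lambda>n. a + b * real n) at_top sequentially"
    by (intro filterlim_tendsto_add_at_top[OF tendsto_const]
        filterlim_tendsto_pos_mult_at_top[OF tendsto_const assms] filterlim_real_sequentially)
qed

lemma tendsto_divide_real_minus_1_0: "(\<lambda>N::nat. c / (real N - 1)) \<longlonglongrightarrow> 0"
  using tendsto_divide_affine_nat_0[of 1 c "-1"] by simp

lemma convex_on_divide_add:
  fixes c :: real
  assumes "0 < c"
  shows "convex_on {-c<..} (\<lambda>t. c / (c + t))"
proof (rule convex_on_realI)
  show "((\<lambda>t. c / (c + t)) has_real_derivative - c / (c + t)\<^sup>2) (at t)" if "t \<in> {-c<..}" for t
    using that by (auto intro!: derivative_eq_intros simp: power2_eq_square)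
  show "- c / (c + t)\<^sup>2 \<le> - c / (c + u)\<^sup>2" if "t \<in> {-c<..}" "u \<in> {-c<..}" "t \<le> u" for t u
    using that assms by (intro divide_left_mono_neg power_mono mult_pos_pos) auto
qed simp

lemma prob_space_density_normalized:
  assumes [measurable]: "f \<in> borel_measurable M" and "(\<integral>\<^sup>+ y. ennreal (f y) \<partial>M) = 1"
  shows "prob_space (density M (\<lambda>y. ennreal (f y)))"
proof (rule prob_spaceI)
  have "emeasure (density M f) (space M) = (\<integral>\<^sup>+ y. ennreal (f y) * indicator (space M) y \<partial>M)"
    by (simp add: emeasure_density)
  also have "\<dots> = (\<integral>\<^sup>+ y. ennreal (f y) \<partial>M)"
    by (intro nn_integral_cong) (simp add: indicator_def)
  finally show "emeasure (density M f) (space (density M f)) = 1"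
    using assms(2) by simp
qed

lemma sum_fun_upd_atLeastAtMost_1:
  fixes N :: nat
  assumes "1 \<le> N"
  shows "(\<Sum>i\<in>{1..N}. f ((z(1 := y)) i)) = f y + (\<Sum>i\<in>{2..N}. f (z i))"
proof -
  have "{1..N} = insert 1 {2..N}"
    using assms by auto
  moreover have "(\<Sum>i\<in>{2..N}. f ((z(1 := y)) i)) = (\<Sum>i\<in>{2..N}. f (z i))"
    by (intro sum.cong) auto
  ultimately show ?thesis
    by simp
qed

section \<open>Sums of i.i.d. random variables\<close>

context prob_space
begin

lemma prob_space_PiM_iid: "prob_space (PiM I (\<lambda>_. M))"
  by (intro prob_space_PiM prob_space_axioms)

lemma
  fixes h :: "'a \<Rightarrow> real"
  assumes "i \<in> I"
  shows integral_PiM_component: "h \<in> borel_measurable M \<Longrightarrow>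
      (\<integral>z. h (z i) \<partial>PiM I (\<lambda>_. M)) = expectation h"
    and integrable_PiM_component: "integrable M h \<Longrightarrow>
      integrable (PiM I (\<lambda>_. M)) (\<lambda>z. h (z i))"
proof -
  have distr: "distr (PiM I (\<lambda>_. M)) M (\<lambda>z. z i) = M"
    using distr_PiM_component[of I "\<lambda>_. M" i] assms prob_space_axioms by simp
  have component: "(\<lambda>z. z i) \<in> measurable (PiM I (\<lambda>_. M)) M"
    using assms by (rule measurable_component_singleton)
  show "(\<integral>z. h (z i) \<partial>PiM I (\<lambda>_. M)) = expectation h" if "h \<in> borel_measurable M"
    using integral_distr[OF component that] distr by simp
  show "integrable (PiM I (\<lambda>_. M)) (\<lambda>z. h (z i))" if "integrable M h"
    using integrable_distr_eq[OF component borel_measurable_integrable[OF that]] that distr by simp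
qed

lemma
  fixes h g :: "'a \<Rightarrow> real"
  assumes "finite I" "i \<in> I" "j \<in> I" "i \<noteq> j" "integrable M h" "integrable M g"
  shows integral_PiM_two_components:
      "(\<integral>z. h (z i) * g (z j) \<partial>PiM I (\<lambda>_. M)) = expectation h * expectation g"
    and integrable_PiM_two_components:
      "integrable (PiM I (\<lambda>_. M)) (\<lambda>z. h (z i) * g (z j))"
proof -
  interpret product: product_prob_space "\<lambda>_. M" I
    by unfold_locales
  define f where "f k x = (if k = i then h x else 1) * (if k = j then g x else 1)" for k x
  have f_integrable: "integrable M (f k)" for k
    using assms by (cases "k = i"; cases "k = j") (auto simp: f_def[abs_def])
  have prod_f: "(\<Prod>k\<in>I. f k (z k)) = h (z i) * g (z j)" for z
    using assms by (simp add: f_def prod.distrib)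
  have "(\<Prod>k\<in>I. expectation (f k)) =
      (\<Prod>k\<in>I. (if k = i then expectation h else 1) * (if k = j then expectation g else 1))"
    using assms by (intro prod.cong) (auto simp: f_def[abs_def] prob_space)
  then have "(\<Prod>k\<in>I. expectation (f k)) = expectation h * expectation g"
    using assms by (simp add: prod.distrib)
  then show "(\<integral>z. h (z i) * g (z j) \<partial>PiM I (\<lambda>_. M)) = expectation h * expectation g"
    using product.product_integral_prod[OF assms(1), of f] f_integrable prod_f by simp
  show "integrable (PiM I (\<lambda>_. M)) (\<lambda>z. h (z i) * g (z j))"
    using product.product_integrable_prod[OF assms(1), of f] f_integrable prod_f by simp
qed

lemma
  fixes h :: "'a \<Rightarrow> real"
  assumes "finite I" "integrable M h" "integrable M (\<lambda>x. (h x)\<^sup>2)" "expectation h = 0"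
  shows integrable_sum_iid_square:
      "integrable (PiM I (\<lambda>_. M)) (\<lambda>z. (\<Sum>i\<in>I. h (z i))\<^sup>2)"
    and integral_sum_iid_square:
      "(\<integral>z. (\<Sum>i\<in>I. h (z i))\<^sup>2 \<partial>PiM I (\<lambda>_. M)) = card I * expectation (\<lambda>x. (h x)\<^sup>2)"
proof -
  have square: "(\<Sum>i\<in>I. h (z i))\<^sup>2 = (\<Sum>i\<in>I. \<Sum>j\<in>I. h (z i) * h (z j))" for z :: "'b \<Rightarrow> 'a"
    by (simp add: power2_eq_square sum_product)
  have integrable_term: "integrable (PiM I (\<lambda>_. M)) (\<lambda>z. h (z i) * h (z j))"
    if "i \<in> I" "j \<in> I" for i j
    using that assms integrable_PiM_component[of i I "\<lambda>x. (h x)\<^sup>2"] integrable_PiM_two_components[of I i j h h]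
    by (cases "i = j") (auto simp: power2_eq_square)
  have integral_term: "(\<integral>z. h (z i) * h (z j) \<partial>PiM I (\<lambda>_. M)) =
      (if i = j then expectation (\<lambda>x. (h x)\<^sup>2) else 0)" if "i \<in> I" "j \<in> I" for i j
    using that assms integral_PiM_component[of i I "\<lambda>x. (h x)\<^sup>2"] integral_PiM_two_components[of I i j h h]
    by (cases "i = j") (auto simp: power2_eq_square borel_measurable_integrable)
  show "integrable (PiM I (\<lambda>_. M)) (\<lambda>z. (\<Sum>i\<in>I. h (z i))\<^sup>2)"
    unfolding square using integrable_term by auto
  have "(\<integral>z. (\<Sum>i\<in>I. h (z i))\<^sup>2 \<partial>PiM I (\<lambda>_. M)) =
      (\<Sum>i\<in>I. \<Sum>j\<in>I. \<integral>z. h (z i) * h (z j) \<partial>PiM I (\<lambda>_. M))"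
    unfolding square using integrable_term
    by (simp add: Bochner_Integration.integral_sum Bochner_Integration.integrable_sum)
  also have "\<dots> = card I * expectation (\<lambda>x. (h x)\<^sup>2)"
    using assms(1) by (simp add: integral_term)
  finally show "(\<integral>z. (\<Sum>i\<in>I. h (z i))\<^sup>2 \<partial>PiM I (\<lambda>_. M)) = card I * expectation (\<lambda>x. (h x)\<^sup>2)" .
qed

lemma prob_sum_iid_deviation:
  fixes g :: "'a \<Rightarrow> real" and B t :: real
  assumes "finite I" and g_measurable[measurable]: "g \<in> borel_measurable M"
    and g_bounded: "\<And>x. x \<in> space M \<Longrightarrow> \<bar>g x\<bar> \<le> B" and "0 < t"
  shows "measure (PiM I (\<lambda>_. M))
      {z \<in> space (PiM I (\<lambda>_. M)). t \<le> \<bar>(\<Sum>i\<in>I. g (z i)) - card I * expectation g\<bar>}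
    \<le> card I * B\<^sup>2 / t\<^sup>2"
proof -
  interpret P: prob_space "PiM I (\<lambda>_. M)"
    by (rule prob_space_PiM_iid)
  define h where "h x = g x - expectation g" for x
  have g_square_bounded: "(g x)\<^sup>2 \<le> B\<^sup>2" if "x \<in> space M" for x
    using power_mono[OF g_bounded[OF that] abs_ge_zero, of 2] by simp
  have g_integrable: "integrable M g" "integrable M (\<lambda>x. (g x)\<^sup>2)"
    using g_bounded g_square_bounded by (auto intro!: integrable_const_bound AE_I2)
  then have h_integrable: "integrable M h" "integrable M (\<lambda>x. (h x)\<^sup>2)"
    by (auto simp: h_def[abs_def] power2_diff)
  have h_mean: "expectation h = 0"
    using g_integrable by (simp add: h_def[abs_def] prob_space)
  have "expectation (\<lambda>x. (h x)\<^sup>2) = expectation (\<lambda>x. (g x)\<^sup>2) - (expectation g)\<^sup>2"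
    unfolding h_def using g_integrable by (rule variance_eq)
  also have "\<dots> \<le> expectation (\<lambda>x. (g x)\<^sup>2)"
    by simp
  also have "\<dots> \<le> B\<^sup>2"
    using g_square_bounded integral_mono[OF g_integrable(2), of "\<lambda>_. B\<^sup>2"] by (simp add: prob_space)
  finally have h_second_moment: "expectation (\<lambda>x. (h x)\<^sup>2) \<le> B\<^sup>2" .
  have centered: "(\<Sum>i\<in>I. g (z i)) - card I * expectation g = (\<Sum>i\<in>I. h (z i))" for z :: "'b \<Rightarrow> 'a"
    by (simp add: h_def sum_subtractf)
  have "measure (PiM I (\<lambda>_. M)) {z \<in> space (PiM I (\<lambda>_. M)). t \<le> \<bar>\<Sum>i\<in>I. h (z i)\<bar>}
      \<le> (\<integral>z. (\<Sum>i\<in>I. h (z i))\<^sup>2 \<partial>PiM I (\<lambda>_. M)) / t\<^sup>2"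
    using integrable_sum_iid_square[OF assms(1) h_integrable h_mean] \<open>0 < t\<close>
    by (intro P.second_moment_method) (auto simp: h_def[abs_def])
  also have "\<dots> \<le> card I * B\<^sup>2 / t\<^sup>2"
    using h_second_moment integral_sum_iid_square[OF assms(1) h_integrable h_mean]
    by (auto intro!: divide_right_mono mult_left_mono)
  finally show ?thesis
    unfolding centered .
qed

lemma
  fixes g :: "'a \<Rightarrow> real"
  assumes "finite I" "integrable M g"
  shows integrable_sum_iid: "integrable (PiM I (\<lambda>_. M)) (\<lambda>z. \<Sum>i\<in>I. g (z i))"
    and integral_sum_iid: "(\<integral>z. (\<Sum>i\<in>I. g (z i)) \<partial>PiM I (\<lambda>_. M)) = card I * expectation g"
  using assms by (simp_all add: integrable_PiM_component integral_PiM_component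
      Bochner_Integration.integral_sum borel_measurable_integrable)

lemma expectation_min_tendsto:
  fixes g :: "'a \<Rightarrow> real"
  assumes "integrable M g"
  shows "(\<lambda>k::nat. expectation (\<lambda>x. min (g x) (real k))) \<longlonglongrightarrow> expectation g"
proof (rule integral_dominated_convergence[where w = "\<lambda>x. \<bar>g x\<bar>"])
  show "AE x in M. (\<lambda>k. min (g x) (real k)) \<longlonglongrightarrow> g x"
  proof (intro AE_I2 tendsto_eventually)
    fix x
    obtain n :: nat where "g x \<le> real n"
      using real_arch_simple by blast
    then show "eventually (\<lambda>k. min (g x) (real k) = g x) sequentially"
      unfolding eventually_sequentially by (intro exI[of _ n]) auto
  qed
qed (use assms in \<open>auto simp: borel_measurable_integrable\<close>)

lemma prob_sum_iid_lower_tail: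
  fixes g :: "'a \<Rightarrow> real" and \<delta> :: real
  assumes g_integrable: "integrable M g" and g_nonneg: "\<And>x. x \<in> space M \<Longrightarrow> 0 \<le> g x"
    and "0 < \<delta>"
  obtains K where "0 \<le> K" "\<And>I. finite I \<Longrightarrow> I \<noteq> {} \<Longrightarrow> measure (PiM I (\<lambda>_. M))
      {z \<in> space (PiM I (\<lambda>_. M)). (\<Sum>i\<in>I. g (z i)) \<le> card I * (expectation g - \<delta>)}
    \<le> K / card I"
proof -
  obtain k :: nat where k: "expectation g - \<delta> / 2 < expectation (\<lambda>x. min (g x) (real k))"
    using order_tendstoD(1)[OF expectation_min_tendsto[OF g_integrable], of "expectation g - \<delta> / 2"]
      \<open>0 < \<delta>\<close> by (auto simp: eventually_sequentially)
  define gc where "gc x = min (g x) (real k)" for x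
  have gc_measurable[measurable]: "gc \<in> borel_measurable M"
    using g_integrable by (simp add: gc_def[abs_def] borel_measurable_integrable)
  have gc_bounded: "\<bar>gc x\<bar> \<le> real k" if "x \<in> space M" for x
    using g_nonneg[OF that] by (simp add: gc_def)
  have "measure (PiM I (\<lambda>_. M))
      {z \<in> space (PiM I (\<lambda>_. M)). (\<Sum>i\<in>I. g (z i)) \<le> card I * (expectation g - \<delta>)}
    \<le> 4 * (real k)\<^sup>2 / \<delta>\<^sup>2 / card I" if I: "finite I" "I \<noteq> {}" for I
  proof -
    interpret P: prob_space "PiM I (\<lambda>_. M)"
      by (rule prob_space_PiM_iid)
    have n: "0 < real (card I)"
      using I by (simp add: card_gt_0_iff)
    have "(\<Sum>i\<in>I. g (z i)) \<le> card I * (expectation g - \<delta>) \<Longrightarrow>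
        card I * \<delta> / 2 \<le> \<bar>(\<Sum>i\<in>I. gc (z i)) - card I * expectation gc\<bar>" for z
    proof -
      assume "(\<Sum>i\<in>I. g (z i)) \<le> card I * (expectation g - \<delta>)"
      moreover have "(\<Sum>i\<in>I. gc (z i)) \<le> (\<Sum>i\<in>I. g (z i))"
        by (intro sum_mono) (simp add: gc_def)
      moreover have "card I * (expectation g - \<delta> / 2) \<le> card I * expectation gc"
        using k n by (simp add: gc_def[abs_def])
      ultimately show ?thesis
        unfolding right_diff_distrib by linarith
    qed
    then have "measure (PiM I (\<lambda>_. M))
        {z \<in> space (PiM I (\<lambda>_. M)). (\<Sum>i\<in>I. g (z i)) \<le> card I * (expectation g - \<delta>)}
      \<le> measure (PiM I (\<lambda>_. M)) {z \<in> space (PiM I (\<lambda>_. M)).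
          card I * \<delta> / 2 \<le> \<bar>(\<Sum>i\<in>I. gc (z i)) - card I * expectation gc\<bar>}"
      by (intro P.finite_measure_mono) auto
    also have "\<dots> \<le> card I * (real k)\<^sup>2 / (card I * \<delta> / 2)\<^sup>2"
      using n \<open>0 < \<delta>\<close> by (intro prob_sum_iid_deviation I gc_bounded) auto
    also have "\<dots> = 4 * (real k)\<^sup>2 / \<delta>\<^sup>2 / card I"
      using n by (simp add: field_simps power2_eq_square)
    finally show ?thesis .
  qed
  then show ?thesis
    by (intro that[of "4 * (real k)\<^sup>2 / \<delta>\<^sup>2"]) auto
qed

lemma integrable_unit_bounded:
  fixes f :: "'a \<Rightarrow> real"
  assumes "f \<in> borel_measurable M" "\<And>z. z \<in> space M \<Longrightarrow> 0 \<le> f z" "\<And>z. z \<in> space M \<Longrightarrow> f z \<le> 1"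
  shows "integrable M f"
  using assms by (intro integrable_const_bound[where B = 1] AE_I2) auto

lemma expectation_le_off_event:
  fixes f :: "'a \<Rightarrow> real"
  assumes "integrable M f" "B \<in> events" "\<And>z. z \<in> space M \<Longrightarrow> f z \<le> 1"
    and "\<And>z. z \<in> space M - B \<Longrightarrow> f z \<le> c" "0 \<le> c"
  shows "expectation f \<le> c + prob B"
proof -
  have indicator_integrable: "integrable M (indicator B :: 'a \<Rightarrow> real)"
    using assms(2) by (intro integrable_real_indicator) (auto simp: less_top[symmetric])
  have "f z \<le> c + indicator B z" if "z \<in> space M" for z
    using assms(3)[OF that] assms(4)[of z] assms(5) that by (auto split: split_indicator)
  then have "expectation f \<le> expectation (\<lambda>z. c + indicator B z)"
    using assms(1) indicator_integrable by (intro integral_mono) auto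
  also have "\<dots> = c + prob B"
    using assms(2) indicator_integrable by (simp add: prob_space Int_absorb2 sets.sets_into_space)
  finally show ?thesis .
qed

lemma expectation_ge_off_event:
  fixes f g :: "'a \<Rightarrow> real"
  assumes "integrable M f" "integrable M g" "B \<in> events"
    and "\<And>z. z \<in> space M \<Longrightarrow> 0 \<le> f z" "\<And>z. z \<in> space M \<Longrightarrow> g z \<le> 1"
    and "\<And>z. z \<in> space M - B \<Longrightarrow> g z \<le> f z"
  shows "expectation g - prob B \<le> expectation f"
proof -
  have indicator_integrable: "integrable M (indicator B :: 'a \<Rightarrow> real)"
    using assms(3) by (intro integrable_real_indicator) (auto simp: less_top[symmetric])
  have "g z - indicator B z \<le> f z" if "z \<in> space M" for z
    using assms(4,5)[OF that] assms(6)[of z] that by (auto split: split_indicator)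
  then have "expectation (\<lambda>z. g z - indicator B z) \<le> expectation f"
    using assms(1,2) indicator_integrable by (intro integral_mono) auto
  then show ?thesis
    using assms(2,3) indicator_integrable by (simp add: Int_absorb2 sets.sets_into_space)
qed

lemma divide_add_expectation_le:
  fixes R :: "'a \<Rightarrow> real"
  assumes "0 < c" "integrable M R" "\<And>z. z \<in> space M \<Longrightarrow> 0 \<le> R z"
  shows "c / (c + expectation R) \<le> expectation (\<lambda>z. c / (c + R z))"
proof (rule jensens_inequality[where I = "{-c<..}"])
  show "integrable M (\<lambda>z. c / (c + R z))"
  proof (rule integrable_unit_bounded)
    fix z assume "z \<in> space M"
    then show "0 \<le> c / (c + R z)" "c / (c + R z) \<le> 1"
      using assms(1) assms(3)[of z] by simp_all
  qed (use assms(2) in \<open>simp add: borel_measurable_integrable\<close>)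
  show "AE z in M. R z \<in> {-c<..}"
    using assms by (intro AE_I2) (auto intro: less_le_trans[of _ 0])
qed (use assms convex_on_divide_add in auto)

end

section \<open>Importance weights\<close>

locale importance_sampling =
  fixes M :: "'a measure" and p q :: "'a \<Rightarrow> real"
  assumes p_measurable[measurable]: "p \<in> borel_measurable M"
    and q_measurable[measurable]: "q \<in> borel_measurable M"
    and p_nonneg: "\<And>y. y \<in> space M \<Longrightarrow> 0 \<le> p y"
    and q_nonneg: "\<And>y. y \<in> space M \<Longrightarrow> 0 \<le> q y"
    and p_normalized: "(\<integral>\<^sup>+ y. ennreal (p y) \<partial>M) = 1"
    and q_normalized: "(\<integral>\<^sup>+ y. ennreal (q y) \<partial>M) = 1"
    and q_pos: "\<And>y. y \<in> space M \<Longrightarrow> 0 < p y \<Longrightarrow> 0 < q y"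
begin

abbreviation "target \<equiv> density M (\<lambda>y. ennreal (p y))"
abbreviation "proposal \<equiv> density M (\<lambda>y. ennreal (q y))"
abbreviation "w \<equiv> wt M p q"

sublocale target: prob_space target
  by (intro prob_space_density_normalized p_measurable p_normalized)

sublocale proposal: prob_space proposal
  by (intro prob_space_density_normalized q_measurable q_normalized)

lemma prob_space_prop_prod: "prob_space (prop_prod M q N)"
  unfolding prop_prod_def by (rule proposal.prob_space_PiM_iid)

lemma supp_pi_sets[measurable]: "supp_pi M p \<in> sets M"
  unfolding supp_pi_def by measurable

lemma wt_measurable[measurable]: "w \<in> borel_measurable M"
  unfolding wt_def[abs_def] by measurable

lemma wt_nonneg: "0 \<le> w y"
  using p_nonneg q_nonneg by (auto simp: wt_def supp_pi_def)

lemma wt_pos: "y \<in> supp_pi M p \<Longrightarrow> 0 < w y"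
  using q_pos by (auto simp: wt_def supp_pi_def)

lemma q_mult_wt: "y \<in> space M \<Longrightarrow> q y * w y = p y"
  using q_pos[of y] p_nonneg[of y] by (cases "0 < p y") (auto simp: wt_def supp_pi_def)

lemma density_wt: "density proposal (\<lambda>y. ennreal (w y)) = target"
proof -
  have "density proposal (\<lambda>y. ennreal (w y)) = density M (\<lambda>y. ennreal (q y) * ennreal (w y))"
    by (simp add: density_density_eq)
  also have "\<dots> = target"
    using q_nonneg wt_nonneg by (intro density_cong) (auto simp: ennreal_mult[symmetric] q_mult_wt)
  finally show ?thesis .
qed

lemma integrable_wt: "integrable proposal w"
  and expectation_wt: "proposal.expectation w = 1"
proof -
  have "(\<integral>\<^sup>+ y. ennreal (w y) \<partial>proposal) = (\<integral>\<^sup>+ y. ennreal (q y) * ennreal (w y) \<partial>M)"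
    by (simp add: nn_integral_density)
  also have "\<dots> = 1"
    using q_nonneg wt_nonneg p_normalized
    by (simp add: ennreal_mult[symmetric] q_mult_wt cong: nn_integral_cong)
  finally have nn_integral_wt: "(\<integral>\<^sup>+ y. ennreal (w y) \<partial>proposal) = 1" .
  then show "integrable proposal w"
    using wt_nonneg by (intro integrableI_nonneg) auto
  then show "proposal.expectation w = 1"
    using nn_integral_wt wt_nonneg by (subst integral_eq_nn_integral) auto
qed

lemma measure_target_singleton:
  assumes "{x} \<in> sets M"
  shows "measure target {x} = w x * measure proposal {x}"
proof -
  have "emeasure target {x} = emeasure (density proposal (\<lambda>y. ennreal (w y))) {x}"
    by (simp only: density_wt)
  also have "\<dots> = (\<integral>\<^sup>+ y. ennreal (w x) * indicator {x} y \<partial>proposal)"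
    using assms by (simp add: emeasure_density split: split_indicator cong: nn_integral_cong)
  also have "\<dots> = ennreal (w x * measure proposal {x})"
    using assms wt_nonneg by (simp add: proposal.emeasure_eq_measure ennreal_mult)
  finally show ?thesis
    using wt_nonneg by (simp add: target.emeasure_eq_measure)
qed

lemma integrable_indicator_singleton: "integrable proposal (indicator {x} :: 'a \<Rightarrow> real)"
  if "{x} \<in> sets M"
  using that by (intro integrable_real_indicator) (simp_all add: proposal.emeasure_finite less_top[symmetric])

lemma integrable_wt_off_singleton: "integrable proposal (\<lambda>t. w t * (1 - indicator {x} t))"
  if "{x} \<in> sets M"
  using that integrable_wt integrable_real_mult_indicator[OF _ integrable_wt, of "{x}"]
  by (simp add: right_diff_distrib)

lemma expectation_wt_off_singleton:
  assumes "{x} \<in> sets M"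
  shows "proposal.expectation (\<lambda>t. w t * (1 - indicator {x} t)) = 1 - w x * measure proposal {x}"
proof -
  have "proposal.expectation (\<lambda>t. w t * (1 - indicator {x} t)) =
      proposal.expectation (\<lambda>t. w t - w x * indicator {x} t)"
    by (intro Bochner_Integration.integral_cong refl) (simp split: split_indicator)
  also have "\<dots> = proposal.expectation w - proposal.expectation (\<lambda>t. w x * indicator {x} t)"
    using assms
    by (intro Bochner_Integration.integral_diff integrable_wt integrable_mult_right integrable_indicator_singleton)
  also have "\<dots> = 1 - w x * measure proposal {x}"
    using sets.sets_into_space[OF assms] by (simp add: expectation_wt Int_absorb2)
  finally show ?thesis .
qed

lemma prob_prop_prod_lower_tail:
  fixes g :: "'a \<Rightarrow> real" and \<delta> :: real
  assumes "integrable proposal g" "\<And>y. y \<in> space M \<Longrightarrow> 0 \<le> g y" "0 < \<delta>"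
  obtains K where "0 \<le> K" "\<And>N. 2 \<le> N \<Longrightarrow> measure (prop_prod M q N)
      {z \<in> space (prop_prod M q N). (\<Sum>i\<in>{2..N::nat}. g (z i)) \<le> (real N - 1) * (proposal.expectation g - \<delta>)}
    \<le> K / (real N - 1)"
proof -
  obtain K where "0 \<le> K" and K: "\<And>I :: nat set. finite I \<Longrightarrow> I \<noteq> {} \<Longrightarrow> measure (PiM I (\<lambda>_. proposal))
      {z \<in> space (PiM I (\<lambda>_. proposal)). (\<Sum>i\<in>I. g (z i)) \<le> card I * (proposal.expectation g - \<delta>)}
    \<le> K / card I"
    using proposal.prob_sum_iid_lower_tail[of g \<delta>] assms by auto
  show ?thesis
  proof (rule that[OF \<open>0 \<le> K\<close>])
    fix N :: nat assume "2 \<le> N"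
    then have card: "real (card {2..N}) = real N - 1"
      by simp
    show "measure (prop_prod M q N)
      {z \<in> space (prop_prod M q N). (\<Sum>i\<in>{2..N}. g (z i)) \<le> (real N - 1) * (proposal.expectation g - \<delta>)}
    \<le> K / (real N - 1)"
      unfolding prop_prod_def card[symmetric] by (rule K) (use \<open>2 \<le> N\<close> in auto)
  qed
qed

section \<open>Selecting the current state\<close>

lemma eps_pt_eq_integral:
  assumes "1 \<le> N"
  shows "eps_pt M p q N y = (\<integral>z. w y / (w y + (\<Sum>i\<in>{2..N}. w (z i))) \<partial>prop_prod M q N)"
  unfolding eps_pt_def Let_def
proof (intro Bochner_Integration.integral_cong refl)
  fix z :: "nat \<Rightarrow> 'a"
  show "w y / (\<Sum>i\<in>{1..N}. w ((z(1 := y)) i)) = w y / (w y + (\<Sum>i\<in>{2..N}. w (z i)))"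
    by (simp only: sum_fun_upd_atLeastAtMost_1[OF assms, of w z y])
qed

lemma eps_pt_nonneg: "0 \<le> eps_pt M p q N y"
  unfolding eps_pt_def Let_def
  by (intro Bochner_Integration.integral_nonneg divide_nonneg_nonneg sum_nonneg wt_nonneg)

lemma eps_pt_upper_bound:
  obtains K where "0 \<le> K"
    "\<And>N y. 2 \<le> N \<Longrightarrow> eps_pt M p q N y \<le> w y / (w y + (real N - 1) / 2) + K / (real N - 1)"
proof -
  obtain K where "0 \<le> K" and K: "\<And>N. 2 \<le> N \<Longrightarrow> measure (prop_prod M q N)
      {z \<in> space (prop_prod M q N). (\<Sum>i\<in>{2..N}. w (z i)) \<le> (real N - 1) * (proposal.expectation w - 1 / 2)}
    \<le> K / (real N - 1)"
    by (rule prob_prop_prod_lower_tail[OF integrable_wt wt_nonneg, of "1 / 2"]) auto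
  have "eps_pt M p q N y \<le> w y / (w y + (real N - 1) / 2) + K / (real N - 1)" if N: "2 \<le> N" for N y
  proof -
    interpret P: prob_space "prop_prod M q N"
      by (rule prob_space_prop_prod)
    have denominator_pos: "0 < w y + (real N - 1) / 2"
      using N wt_nonneg[of y] by (simp add: field_simps)
    define S where "S z = (\<Sum>i\<in>{2..N}. w (z i))" for z :: "nat \<Rightarrow> 'a"
    define Bad where "Bad = {z \<in> space (prop_prod M q N). S z \<le> (real N - 1) * (1 - 1 / 2)}"
    have S_measurable[measurable]: "S \<in> borel_measurable (prop_prod M q N)"
      unfolding S_def[abs_def] prop_prod_def by measurable
    have S_nonneg: "0 \<le> S z" for z
      unfolding S_def by (intro sum_nonneg wt_nonneg)
    have ratio_bounds: "0 \<le> w y / (w y + S z)" "w y / (w y + S z) \<le> 1" for z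
      using S_nonneg[of z] wt_nonneg[of y] by (cases "w y = 0"; simp)+
    have "eps_pt M p q N y = P.expectation (\<lambda>z. w y / (w y + S z))"
      using N by (simp add: eps_pt_eq_integral S_def)
    also have "\<dots> \<le> w y / (w y + (real N - 1) / 2) + P.prob Bad"
    proof (rule P.expectation_le_off_event)
      show "integrable (prop_prod M q N) (\<lambda>z. w y / (w y + S z))"
        using ratio_bounds by (intro P.integrable_unit_bounded) auto
      show "w y / (w y + S z) \<le> w y / (w y + (real N - 1) / 2)" if "z \<in> space (prop_prod M q N) - Bad" for z
      proof -
        have "(real N - 1) / 2 < S z"
          using that by (auto simp: Bad_def)
        then show ?thesis
          using wt_nonneg[of y] denominator_pos by (intro divide_left_mono mult_pos_pos) linarith+
      qed
    qed (use ratio_bounds wt_nonneg denominator_pos in \<open>auto simp: Bad_def\<close>)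
    also have "P.prob Bad \<le> K / (real N - 1)"
      using K[OF N] by (simp add: Bad_def S_def expectation_wt)
    finally show ?thesis
      by simp
  qed
  with \<open>0 \<le> K\<close> show ?thesis
    by (rule that)
qed

lemma eps_pt_tendsto_0: "(\<lambda>N. eps_pt M p q N y) \<longlonglongrightarrow> 0"
proof -
  obtain K where
    K: "\<And>N y. 2 \<le> N \<Longrightarrow> eps_pt M p q N y \<le> w y / (w y + (real N - 1) / 2) + K / (real N - 1)"
    using eps_pt_upper_bound by metis
  have "(\<lambda>N. w y / (w y + (real N - 1) / 2)) \<longlonglongrightarrow> 0"
    using tendsto_divide_affine_nat_0[of "1 / 2" "w y" "w y - 1 / 2"] by (simp add: field_simps)
  then have upper_tendsto: "(\<lambda>N. w y / (w y + (real N - 1) / 2) + K / (real N - 1)) \<longlonglongrightarrow> 0"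
    using tendsto_add_zero tendsto_divide_real_minus_1_0 by blast
  have "eventually (\<lambda>N. eps_pt M p q N y \<le> w y / (w y + (real N - 1) / 2) + K / (real N - 1)) sequentially"
    by (rule eventually_sequentiallyI[of 2]) (rule K)
  from tendsto_sandwich[OF _ this tendsto_const upper_tendsto] show ?thesis
    by (simp add: eps_pt_nonneg)
qed

lemma eps_avg_tendsto_0: "(\<lambda>N. eps_avg M p q N) \<longlonglongrightarrow> 0"
proof -
  obtain K where "0 \<le> K"
    and K: "\<And>N y. 2 \<le> N \<Longrightarrow> eps_pt M p q N y \<le> w y / (w y + (real N - 1) / 2) + K / (real N - 1)"
    by (rule eps_pt_upper_bound) (rule that)
  define b where "b n y = w y / (w y + real n / 2)" for n y
  have b_bounds: "0 \<le> b n y" "b n y \<le> 1" for n y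
    using wt_nonneg[of y] by (cases "w y = 0"; simp add: b_def)+
  have b_measurable[measurable]: "b n \<in> borel_measurable M" for n
    unfolding b_def[abs_def] by measurable
  have b_integrable: "integrable target (b n)" for n
    using b_bounds by (intro target.integrable_unit_bounded) auto
  have "(\<lambda>n. target.expectation (b n)) \<longlonglongrightarrow> target.expectation (\<lambda>_. 0)"
  proof (rule integral_dominated_convergence[where w = "\<lambda>_. 1"])
    show "AE y in target. (\<lambda>n. b n y) \<longlonglongrightarrow> 0"
      using tendsto_divide_affine_nat_0[of "1 / 2" "w _" "w _"] by (intro AE_I2) (simp add: b_def field_simps)
  qed (use b_bounds in \<open>auto simp: abs_of_nonneg\<close>)
  then have upper_tendsto: "(\<lambda>N. target.expectation (b (N - 1)) + K / (real N - 1)) \<longlonglongrightarrow> 0 + 0"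
    by (intro tendsto_add seq_offset_neg tendsto_divide_real_minus_1_0) simp
  have "eps_avg M p q N \<le> target.expectation (b (N - 1)) + K / (real N - 1)" if "2 \<le> N" for N
  proof -
    have "indicator (supp_pi M p) y * eps_pt M p q N y \<le> b (N - 1) y + K / (real N - 1)" for y
      using K[OF that, of y] eps_pt_nonneg[of N y] that
      by (auto simp: b_def of_nat_diff split: split_indicator)
    then have "eps_avg M p q N \<le> target.expectation (\<lambda>y. b (N - 1) y + K / (real N - 1))"
      unfolding eps_avg_def using b_integrable b_bounds \<open>0 \<le> K\<close> that
      by (intro integral_mono') auto
    then show ?thesis
      using b_integrable by (simp add: target.prob_space[unfolded space_density])
  qed
  then have "eventually (\<lambda>N. eps_avg M p q N \<le> target.expectation (b (N - 1)) + K / (real N - 1)) sequentially"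
    by (rule eventually_sequentiallyI[of 2])
  moreover have "0 \<le> eps_avg M p q N" for N
    unfolding eps_avg_def by (intro Bochner_Integration.integral_nonneg mult_nonneg_nonneg eps_pt_nonneg) auto
  ultimately show ?thesis
    using tendsto_sandwich[OF _ _ tendsto_const upper_tendsto] by simp
qed

section \<open>The kernel at an atom\<close>

definition hits :: "'a \<Rightarrow> nat \<Rightarrow> (nat \<Rightarrow> 'a) \<Rightarrow> real" where
  "hits x N z = (\<Sum>i\<in>{2..N}. indicator {x} (z i))"

definition weight_off :: "'a \<Rightarrow> nat \<Rightarrow> (nat \<Rightarrow> 'a) \<Rightarrow> real" where
  "weight_off x N z = (\<Sum>i\<in>{2..N}. w (z i) * (1 - indicator {x} (z i)))"

lemma hits_measurable[measurable]:
  assumes [measurable]: "{x} \<in> sets M"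
  shows "hits x N \<in> borel_measurable (prop_prod M q N)"
  unfolding hits_def[abs_def] prop_prod_def by measurable

lemma weight_off_measurable[measurable]:
  assumes [measurable]: "{x} \<in> sets M"
  shows "weight_off x N \<in> borel_measurable (prop_prod M q N)"
  unfolding weight_off_def[abs_def] prop_prod_def by measurable

lemma hits_nonneg: "0 \<le> hits x N z"
  unfolding hits_def by (intro sum_nonneg) simp

lemma weight_off_nonneg: "0 \<le> weight_off x N z"
  unfolding weight_off_def using wt_nonneg by (intro sum_nonneg) (simp split: split_indicator)

lemma
  assumes "{x} \<in> sets M" "1 \<le> N"
  shows integrable_weight_off: "integrable (prop_prod M q N) (weight_off x N)"
    and integral_weight_off:
      "(\<integral>z. weight_off x N z \<partial>prop_prod M q N) = (real N - 1) * (1 - w x * measure proposal {x})"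
  using proposal.integrable_sum_iid[OF _ integrable_wt_off_singleton, of "{2..N}"]
    proposal.integral_sum_iid[OF _ integrable_wt_off_singleton, of "{2..N}"]
    expectation_wt_off_singleton assms
  by (simp_all add: weight_off_def[abs_def] prop_prod_def of_nat_diff)

lemma PN_singleton_eq_integral:
  assumes "1 \<le> N"
  shows "PN M p q N x {x} =
    (\<integral>z. w x * (1 + hits x N z) / (w x * (1 + hits x N z) + weight_off x N z) \<partial>prop_prod M q N)"
  unfolding PN_def Let_def
proof (intro Bochner_Integration.integral_cong refl)
  fix z :: "nat \<Rightarrow> 'a"
  define z' where "z' = z(1 := x)"
  have "(\<Sum>i\<in>{2..N}. w (z i)) =
      (\<Sum>i\<in>{2..N}. w x * indicator {x} (z i) + w (z i) * (1 - indicator {x} (z i)))"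
    by (intro sum.cong refl) (simp split: split_indicator)
  also have "\<dots> = w x * hits x N z + weight_off x N z"
    by (simp only: hits_def weight_off_def sum.distrib sum_distrib_left)
  finally have total: "(\<Sum>i\<in>{1..N}. w (z' i)) = w x * (1 + hits x N z) + weight_off x N z"
    unfolding z'_def sum_fun_upd_atLeastAtMost_1[OF assms, of w z x] by (simp add: algebra_simps)
  have "(\<Sum>i\<in>{2..N}. w (z i) * indicator {x} (z i)) = (\<Sum>i\<in>{2..N}. w x * indicator {x} (z i))"
    by (intro sum.cong refl) (simp split: split_indicator)
  then have numerator: "(\<Sum>i\<in>{1..N}. w (z' i) * indicator {x} (z' i)) = w x * (1 + hits x N z)"
    unfolding z'_def sum_fun_upd_atLeastAtMost_1[OF assms, of "\<lambda>t. w t * indicator {x} t" z x]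
    by (simp add: hits_def sum_distrib_left algebra_simps)
  have "(\<Sum>i\<in>{1..N}. w (z' i) / (\<Sum>j\<in>{1..N}. w (z' j)) * indicator {x} (z' i)) =
      (\<Sum>i\<in>{1..N}. w (z' i) * indicator {x} (z' i)) / (\<Sum>j\<in>{1..N}. w (z' j))"
    by (simp only: sum_divide_distrib times_divide_eq_left)
  then show "(\<Sum>i\<in>{1..N}. w ((z(1 := x)) i) / (\<Sum>j\<in>{1..N}. w ((z(1 := x)) j)) * indicator {x} ((z(1 := x)) i))
      = w x * (1 + hits x N z) / (w x * (1 + hits x N z) + weight_off x N z)"
    unfolding z'_def[symmetric] total numerator .
qed

lemma PN_nonneg: "0 \<le> PN M p q N y A"
  unfolding PN_def Let_def
  by (intro Bochner_Integration.integral_nonneg divide_nonneg_nonneg sum_nonneg mult_nonneg_nonneg wt_nonneg)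
    auto

lemma PN_integrand_bounds:
  assumes "x \<in> supp_pi M p"
  shows "0 \<le> w x * (1 + hits x N z) / (w x * (1 + hits x N z) + weight_off x N z)"
    and "w x * (1 + hits x N z) / (w x * (1 + hits x N z) + weight_off x N z) \<le> 1"
proof -
  have "0 < w x * (1 + hits x N z)"
    using wt_pos[OF assms] hits_nonneg[of x N z] by simp
  then show "0 \<le> w x * (1 + hits x N z) / (w x * (1 + hits x N z) + weight_off x N z)"
    and "w x * (1 + hits x N z) / (w x * (1 + hits x N z) + weight_off x N z) \<le> 1"
    using weight_off_nonneg[of x N z] by simp_all
qed

lemma integrable_PN_integrand:
  assumes "x \<in> supp_pi M p" "{x} \<in> sets M"
  shows "integrable (prop_prod M q N) (\<lambda>z. w x * (1 + hits x N z) / (w x * (1 + hits x N z) + weight_off x N z))"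
  using PN_integrand_bounds[OF assms(1)] assms(2)
  by (intro prob_space.integrable_unit_bounded[OF prob_space_prop_prod]) auto

lemma PN_singleton_upper_bound:
  fixes \<delta> :: real
  assumes x: "x \<in> supp_pi M p" and x_sets[measurable]: "{x} \<in> sets M" and "0 < \<delta>"
  obtains K where "\<And>N. 2 \<le> N \<Longrightarrow> PN M p q N x {x} \<le>
      w x * (1 / (real N - 1) + measure proposal {x} + \<delta>) /
        (w x * (1 / (real N - 1) + measure proposal {x} + \<delta>) + max 0 (1 - w x * measure proposal {x} - \<delta>))
      + K / (real N - 1)"
proof -
  define a r where "a = w x" and "r = measure proposal {x}"
  have a: "0 < a"
    using wt_pos[OF x] by (simp add: a_def)
  have off_x_integrable: "integrable proposal (\<lambda>t. 1 - indicator {x} t :: real)"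
    using integrable_indicator_singleton[OF x_sets] by simp
  have off_x_expectation: "proposal.expectation (\<lambda>t. 1 - indicator {x} t :: real) = 1 - r"
    using integrable_indicator_singleton[OF x_sets] sets.sets_into_space[OF x_sets]
    by (simp add: r_def Int_absorb2 proposal.prob_space[unfolded space_density])
  obtain K1 where "0 \<le> K1" and K1: "\<And>N. 2 \<le> N \<Longrightarrow> measure (prop_prod M q N)
      {z \<in> space (prop_prod M q N). (\<Sum>i\<in>{2..N}. 1 - indicator {x} (z i))
        \<le> (real N - 1) * (proposal.expectation (\<lambda>t. 1 - indicator {x} t) - \<delta>)}
    \<le> K1 / (real N - 1)"
    by (rule prob_prop_prod_lower_tail[OF off_x_integrable _ \<open>0 < \<delta>\<close>]) (auto split: split_indicator)
  obtain K2 where "0 \<le> K2" and K2: "\<And>N. 2 \<le> N \<Longrightarrow> measure (prop_prod M q N)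
      {z \<in> space (prop_prod M q N). (\<Sum>i\<in>{2..N}. w (z i) * (1 - indicator {x} (z i)))
        \<le> (real N - 1) * (proposal.expectation (\<lambda>t. w t * (1 - indicator {x} t)) - \<delta>)}
    \<le> K2 / (real N - 1)"
    by (rule prob_prop_prod_lower_tail[OF integrable_wt_off_singleton[OF x_sets] _ \<open>0 < \<delta>\<close>])
      (auto simp: wt_nonneg split: split_indicator)
  have bound: "PN M p q N x {x} \<le>
      a * (1 / (real N - 1) + r + \<delta>) / (a * (1 / (real N - 1) + r + \<delta>) + max 0 (1 - a * r - \<delta>))
      + (K1 + K2) / (real N - 1)" if N: "2 \<le> N" for N
  proof -
    interpret P: prob_space "prop_prod M q N"
      by (rule prob_space_prop_prod)
    define n where "n = real N - 1"
    have n: "1 \<le> n"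
      using N by (simp add: n_def)
    define U where "U = a * (1 / n + r + \<delta>) / (a * (1 / n + r + \<delta>) + max 0 (1 - a * r - \<delta>))"
    define Bad1 where
      "Bad1 = {z \<in> space (prop_prod M q N). (\<Sum>i\<in>{2..N}. 1 - indicator {x} (z i)) \<le> n * (1 - r - \<delta>)}"
    define Bad2 where "Bad2 = {z \<in> space (prop_prod M q N). weight_off x N z \<le> n * (1 - a * r - \<delta>)}"
    have Bad1_event: "Bad1 \<in> P.events"
      unfolding Bad1_def prop_prod_def by measurable
    have Bad2_event: "Bad2 \<in> P.events"
      unfolding Bad2_def by measurable
    have "P.prob (Bad1 \<union> Bad2) \<le> P.prob Bad1 + P.prob Bad2"
      using Bad1_event Bad2_event by (rule measure_Un_le)
    also have "\<dots> \<le> K1 / n + K2 / n"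
      using K1[OF N] K2[OF N] off_x_expectation expectation_wt_off_singleton[OF x_sets]
      by (intro add_mono) (simp_all add: Bad1_def Bad2_def weight_off_def n_def a_def r_def)
    finally have prob_Bad: "P.prob (Bad1 \<union> Bad2) \<le> (K1 + K2) / n"
      by (simp add: add_divide_distrib)
    have off_Bad: "a * (1 + hits x N z) / (a * (1 + hits x N z) + weight_off x N z) \<le> U"
      if "z \<in> space (prop_prod M q N) - (Bad1 \<union> Bad2)" for z
    proof -
      have "(\<Sum>i\<in>{2..N}. 1 - indicator {x} (z i)) = n - hits x N z"
        using N by (simp add: hits_def n_def sum_subtractf of_nat_diff)
      then have "hits x N z < n * (r + \<delta>)"
        using that by (auto simp: Bad1_def algebra_simps)
      moreover have "n * max 0 (1 - a * r - \<delta>) \<le> weight_off x N z"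
        using that n weight_off_nonneg[of x N z] by (auto simp: Bad2_def max_def)
      ultimately show ?thesis
        unfolding U_def using a n hits_nonneg[of x N z] by (intro count_ratio_le) auto
    qed
    have "PN M p q N x {x} = P.expectation (\<lambda>z. a * (1 + hits x N z) / (a * (1 + hits x N z) + weight_off x N z))"
      using N by (simp add: PN_singleton_eq_integral a_def)
    also have "\<dots> \<le> U + P.prob (Bad1 \<union> Bad2)"
    proof (rule P.expectation_le_off_event)
      show "0 \<le> U"
        unfolding U_def using a n measure_nonneg[of proposal "{x}"] \<open>0 < \<delta>\<close>
        by (intro divide_nonneg_nonneg) (auto simp: r_def)
    qed (use Bad1_event Bad2_event off_Bad integrable_PN_integrand[OF x x_sets] PN_integrand_bounds[OF x] in
        \<open>auto simp: a_def\<close>)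
    also have "\<dots> \<le> U + (K1 + K2) / n"
      using prob_Bad by simp
    finally show ?thesis
      by (simp add: U_def n_def)
  qed
  then show ?thesis
    unfolding a_def r_def by (rule that)
qed

lemma PN_singleton_lower_bound:
  fixes \<delta> :: real
  assumes x: "x \<in> supp_pi M p" and x_sets[measurable]: "{x} \<in> sets M"
    and "0 < \<delta>" "\<delta> < measure proposal {x}"
  obtains K where "\<And>N. 2 \<le> N \<Longrightarrow>
      w x * (measure proposal {x} - \<delta>) / (w x * (measure proposal {x} - \<delta>) + (1 - w x * measure proposal {x}))
      - K / (real N - 1) \<le> PN M p q N x {x}"
proof -
  define a r where "a = w x" and "r = measure proposal {x}"
  have a: "0 < a"
    using wt_pos[OF x] by (simp add: a_def)
  obtain K where "0 \<le> K" and K: "\<And>N. 2 \<le> N \<Longrightarrow> measure (prop_prod M q N)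
      {z \<in> space (prop_prod M q N). (\<Sum>i\<in>{2..N}. indicator {x} (z i))
        \<le> (real N - 1) * (proposal.expectation (indicator {x}) - \<delta>)}
    \<le> K / (real N - 1)"
    by (rule prob_prop_prod_lower_tail[OF integrable_indicator_singleton[OF x_sets] _ \<open>0 < \<delta>\<close>]) auto
  have bound: "a * (r - \<delta>) / (a * (r - \<delta>) + (1 - a * r)) - K / (real N - 1) \<le> PN M p q N x {x}"
    if N: "2 \<le> N" for N
  proof -
    interpret P: prob_space "prop_prod M q N"
      by (rule prob_space_prop_prod)
    define n where "n = real N - 1"
    have n: "1 \<le> n"
      using N by (simp add: n_def)
    define c where "c = a * (r - \<delta>)"
    have c: "0 < c"
      using a \<open>\<delta> < measure proposal {x}\<close> by (simp add: c_def r_def)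
    define Bad where "Bad = {z \<in> space (prop_prod M q N). hits x N z \<le> n * (r - \<delta>)}"
    have Bad_event: "Bad \<in> P.events"
      unfolding Bad_def by measurable
    have prob_Bad: "P.prob Bad \<le> K / n"
      using K[OF N] sets.sets_into_space[OF x_sets] by (simp add: Bad_def hits_def n_def r_def Int_absorb2)
    define g where "g z = c / (c + weight_off x N z / n)" for z
    have g_bounds: "0 \<le> g z" "g z \<le> 1" for z
    proof -
      have "0 \<le> weight_off x N z / n"
        using weight_off_nonneg[of x N z] n by simp
      then show "0 \<le> g z" "g z \<le> 1"
        using c by (simp_all add: g_def)
    qed
    have g_measurable[measurable]: "g \<in> borel_measurable (prop_prod M q N)"
      unfolding g_def[abs_def] by measurable
    have g_integrable: "integrable (prop_prod M q N) g"
      using g_bounds by (intro P.integrable_unit_bounded) auto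
    have g_off_Bad: "g z \<le> a * (1 + hits x N z) / (a * (1 + hits x N z) + weight_off x N z)"
      if "z \<in> space (prop_prod M q N) - Bad" for z
    proof -
      have "n * (r - \<delta>) \<le> 1 + hits x N z"
        using that by (auto simp: Bad_def)
      then show ?thesis
        unfolding g_def c_def using a n \<open>\<delta> < measure proposal {x}\<close> weight_off_nonneg[of x N z]
        by (intro count_ratio_ge) (auto simp: r_def)
    qed
    have "P.expectation (\<lambda>z. weight_off x N z / n) = 1 - a * r"
      using integral_weight_off[OF x_sets, of N] N n by (simp add: n_def a_def r_def)
    then have "c / (c + (1 - a * r)) \<le> P.expectation g"
      using P.divide_add_expectation_le[OF c, of "\<lambda>z. weight_off x N z / n"]
        integrable_weight_off[OF x_sets, of N] weight_off_nonneg n N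
      by (simp add: g_def[abs_def])
    also have "P.expectation g - P.prob Bad \<le>
        P.expectation (\<lambda>z. a * (1 + hits x N z) / (a * (1 + hits x N z) + weight_off x N z))"
      using g_integrable Bad_event g_bounds g_off_Bad integrable_PN_integrand[OF x x_sets]
        PN_integrand_bounds[OF x]
      by (intro P.expectation_ge_off_event) (auto simp: a_def)
    also have "\<dots> = PN M p q N x {x}"
      using N by (simp add: PN_singleton_eq_integral a_def)
    finally show ?thesis
      using prob_Bad by (simp add: c_def n_def)
  qed
  then show ?thesis
    unfolding a_def r_def by (rule that)
qed

lemma PN_singleton_tendsto:
  assumes x: "x \<in> supp_pi M p" and x_sets[measurable]: "{x} \<in> sets M"
  shows "(\<lambda>N. PN M p q N x {x}) \<longlonglongrightarrow> w x * measure proposal {x}"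
proof -
  define a r s where "a = w x" and "r = measure proposal {x}" and "s = 1 - a * r"
  have a: "0 < a"
    using wt_pos[OF x] by (simp add: a_def)
  have r: "0 \<le> r"
    by (simp add: r_def)
  have "0 \<le> proposal.expectation (\<lambda>t. w t * (1 - indicator {x} t))"
    using wt_nonneg by (intro Bochner_Integration.integral_nonneg) (simp split: split_indicator)
  then have s: "0 \<le> s"
    using expectation_wt_off_singleton[OF x_sets] by (simp add: s_def a_def r_def)
  define U where "U \<delta> = a * (r + \<delta>) / (a * (r + \<delta>) + max 0 (s - \<delta>))" for \<delta>
  define L where "L \<delta> = a * max 0 (r - \<delta>) / (a * max 0 (r - \<delta>) + s)" for \<delta>
  have inverse_tendsto: "(\<lambda>N. 1 / (real N - 1)) \<longlonglongrightarrow> 0"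
    by (rule tendsto_divide_real_minus_1_0)
  have "(U \<longlongrightarrow> a * (r + 0) / (a * (r + 0) + max 0 (s - 0))) (at_right 0)"
    unfolding U_def using a r s by (intro tendsto_intros) (auto simp: s_def)
  moreover have "(L \<longlongrightarrow> a * max 0 (r - 0) / (a * max 0 (r - 0) + s)) (at_right 0)"
    unfolding L_def using a r s by (intro tendsto_intros) (auto simp: s_def)
  ultimately have U_tendsto: "(U \<longlongrightarrow> a * r) (at_right 0)" and L_tendsto: "(L \<longlongrightarrow> a * r) (at_right 0)"
    using r s by (simp_all add: s_def)
  have "(\<lambda>N. PN M p q N x {x}) \<longlonglongrightarrow> a * r"
  proof (rule tendsto_from_approximate_bounds[OF U_tendsto L_tendsto])
    fix \<delta> :: real assume "0 < \<delta>"
    obtain K where K: "\<And>N. 2 \<le> N \<Longrightarrow> PN M p q N x {x} \<le>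
        a * (1 / (real N - 1) + r + \<delta>) / (a * (1 / (real N - 1) + r + \<delta>) + max 0 (s - \<delta>))
        + K / (real N - 1)"
      using PN_singleton_upper_bound[OF x x_sets \<open>0 < \<delta>\<close>] unfolding a_def r_def s_def by (auto simp: diff_diff_eq)
    have "(\<lambda>N. a * (1 / (real N - 1) + r + \<delta>)) \<longlonglongrightarrow> a * (0 + r + \<delta>)"
      by (intro tendsto_mult tendsto_add tendsto_const inverse_tendsto)
    moreover have "0 < a * (0 + r + \<delta>) + max 0 (s - \<delta>)"
      using mult_pos_pos[OF a, of "r + \<delta>"] r \<open>0 < \<delta>\<close> by (simp add: add_pos_nonneg)
    ultimately have "(\<lambda>N. a * (1 / (real N - 1) + r + \<delta>) / (a * (1 / (real N - 1) + r + \<delta>) + max 0 (s - \<delta>))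
        + K / (real N - 1)) \<longlonglongrightarrow> U \<delta> + 0"
      unfolding U_def by (intro tendsto_add tendsto_divide tendsto_const tendsto_divide_real_minus_1_0) auto
    moreover have "eventually (\<lambda>N. PN M p q N x {x} \<le>
        a * (1 / (real N - 1) + r + \<delta>) / (a * (1 / (real N - 1) + r + \<delta>) + max 0 (s - \<delta>))
        + K / (real N - 1)) sequentially"
      by (rule eventually_sequentiallyI[of 2]) (rule K)
    ultimately show "\<exists>u. u \<longlonglongrightarrow> U \<delta> \<and> eventually (\<lambda>N. PN M p q N x {x} \<le> u N) sequentially"
      by auto
  next
    fix \<delta> :: real assume "0 < \<delta>"
    show "\<exists>v. v \<longlonglongrightarrow> L \<delta> \<and> eventually (\<lambda>N. v N \<le> PN M p q N x {x}) sequentially"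
    proof (cases "\<delta> < r")
      case True
      obtain K where K: "\<And>N. 2 \<le> N \<Longrightarrow> a * (r - \<delta>) / (a * (r - \<delta>) + s) - K / (real N - 1) \<le> PN M p q N x {x}"
        using PN_singleton_lower_bound[OF x x_sets \<open>0 < \<delta>\<close>] True unfolding a_def r_def s_def by auto
      have "(\<lambda>N. a * (r - \<delta>) / (a * (r - \<delta>) + s) - K / (real N - 1)) \<longlonglongrightarrow> L \<delta> - 0"
        using True by (intro tendsto_diff tendsto_const tendsto_divide_real_minus_1_0) (simp add: L_def)
      moreover have "eventually (\<lambda>N. a * (r - \<delta>) / (a * (r - \<delta>) + s) - K / (real N - 1) \<le> PN M p q N x {x}) sequentially"
        by (rule eventually_sequentiallyI[of 2]) (rule K)
      ultimately show ?thesis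
        by auto
    next
      case False
      then have "L \<delta> = 0"
        by (simp add: L_def)
      then show ?thesis
        using PN_nonneg by (intro exI[of _ "\<lambda>_. 0"]) auto
    qed
  qed
  then show ?thesis
    by (simp add: a_def r_def)
qed

end

theorem lemma6p10:
  fixes M :: "'a measure" and p q :: "'a \<Rightarrow> real" and x :: 'a
  assumes "sigma_finite_measure M"
    and "\<And>y. y \<in> space M \<Longrightarrow> {y} \<in> sets M"
    and "p \<in> borel_measurable M" and "q \<in> borel_measurable M"
    and "\<And>y. y \<in> space M \<Longrightarrow> p y \<ge> 0"
    and "\<And>y. y \<in> space M \<Longrightarrow> q y \<ge> 0"
    and "(\<integral>\<^sup>+ y. ennreal (p y) \<partial>M) = 1"
    and "(\<integral>\<^sup>+ y. ennreal (q y) \<partial>M) = 1"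
    and "\<And>y. y \<in> space M \<Longrightarrow> p y > 0 \<Longrightarrow> q y > 0"
    and "x \<in> supp_pi M p"
  shows "(\<lambda>N. eps_avg M p q N) \<longlonglongrightarrow> 0 \<and>
    (\<lambda>N. eps_pt M p q N x) \<longlonglongrightarrow> 0 \<and>
    (\<lambda>N. PN M p q N x {x}) \<longlonglongrightarrow> measure (density M (\<lambda>y. ennreal (p y))) {x}"
proof -
  interpret importance_sampling M p q
    using assms(3-9) by unfold_locales
  have "{x} \<in> sets M"
    using assms(2,10) by (simp add: supp_pi_def)
  then show ?thesis
    using eps_avg_tendsto_0 eps_pt_tendsto_0 PN_singleton_tendsto[OF assms(10)] measure_target_singleton
    by simp
qed

end
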